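(* Let $\Gamma=(V,E)$ be a finite graph and let $\phi\in\Phi(\Gamma)$. If $\nvdash_\Gamma\phi$, then there exists a game $G=(V,\{S_v\}_{v\in V},\{u_v\}_{v\in V})$ over the graph $\Gamma$ such that $G\nvDash\phi$.
   Context: Graphs are finite, undirected, with no loops or multiple edges. For $v\in V$, $Adj(v)$ is the set of vertices adjacent to $v$ and $Adj^+(v)=Adj(v)\cup\{v\}$. For $U\subseteq V$ the border is ${\cal B}(U)=\{v\in U\mid (v,w)\in E\text{ for some }w\in V\setminus U\}$. A cut $(U,W)$ of $\Gamma$ is a partition $V=U\sqcup W$. Formulas: $\Phi(\Gamma)$ is the smallest set containing $\bot$, all expressions $A\rhd B$ with $A,B\subseteq V$, and $\phi\rightarrow\psi$ for $\phi,\psi\in\Phi(\Gamma)$ (other connectives, e.g. $\neg$, are the usual abbreviations). $A,B$ denotes $A\cup B$, and a single vertex $v$ stands for $\{v\}$. Proof system: $\vdash_\Gamma\phi$ means $\phi$ is derivable from propositional tautologies of $\Phi(\Gamma)$ and the axioms (1) Reflexivity: $A\rhd B$ whenever $B\subseteq A$; (2) Augmentation: $A\rhd B\rightarrow A,C\rhd B,C$; (3) Transitivity: $A\rhd B\rightarrow(B\rhd C\rightarrow A\rhd C)$; (4) Contiguity: $A,B\rhd C\rightarrow {\cal B}(U),{\cal B}(W),B\rhd C$ for every cut $(U,W)$ of $\Gamma$ with $A\subseteq U$ and $C\subseteq W$; using the rule Modus Ponens. Semantics: a game over $\Gamma$ is a strategic game $G=(V,\{S_v\}_{v\in V},\{u_v\}_{v\in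 V})$ whose set of players is $V$, each strategy set $S_v$ is a finite set, and each pay-off function $u_v$ (real-valued on strategy profiles) depends only on the strategies of the players in $Adj^+(v)$. $NE(G)$ is the set of (pure) Nash equilibria of $G$. For profiles $\mathbf s=\langle s_v\rangle_{v\in V}$, $\mathbf t=\langle t_v\rangle_{v\in V}$ and $X\subseteq V$, $\mathbf s=_X\mathbf t$ means $s_x=t_x$ for all $x\in X$. Truth: $G\nvDash\bot$; $G\vDash A\rhd B$ iff for all $\mathbf s,\mathbf t\in NE(G)$, $\mathbf s=_A\mathbf t$ implies $\mathbf s=_B\mathbf t$; $G\vDash\psi_1\rightarrow\psi_2$ iff $G\nvDash\psi_1$ or $G\vDash\psi_2$. *)

theory Defs
  imports Main "HOL.Real"
begin

definition graph :: "'v set \<Rightarrow> ('v \<Rightarrow> 'v \<Rightarrow> bool) \<Rightarrow> bool" where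
  "graph V E \<longleftrightarrow> finite V \<and> (\<forall>v w. E v w \<longrightarrow> v \<in> V \<and> w \<in> V)
     \<and> (\<forall>v w. E v w \<longrightarrow> E w v) \<and> (\<forall>v. \<not> E v v)"

definition Adj :: "'v set \<Rightarrow> ('v \<Rightarrow> 'v \<Rightarrow> bool) \<Rightarrow> 'v \<Rightarrow> 'v set" where
  "Adj V E v = {w \<in> V. E v w}"

definition AdjPlus :: "'v set \<Rightarrow> ('v \<Rightarrow> 'v \<Rightarrow> bool) \<Rightarrow> 'v \<Rightarrow> 'v set" where
  "AdjPlus V E v = insert v (Adj V E v)"

definition border :: "'v set \<Rightarrow> ('v \<Rightarrow> 'v \<Rightarrow> bool) \<Rightarrow> 'v set \<Rightarrow> 'v set" where
  "border V E U = {v \<in> U. \<exists>w \<in> V - U. E v w}"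

definition is_cut :: "'v set \<Rightarrow> 'v set \<Rightarrow> 'v set \<Rightarrow> bool" where
  "is_cut V U W \<longleftrightarrow> U \<union> W = V \<and> U \<inter> W = {}"

datatype 'v fml = Bot | Rhd "'v set" "'v set" | Imp "'v fml" "'v fml"

fun wf_fml :: "'v set \<Rightarrow> 'v fml \<Rightarrow> bool" where
  "wf_fml V Bot = True"
| "wf_fml V (Rhd A B) = (A \<subseteq> V \<and> B \<subseteq> V)"
| "wf_fml V (Imp p q) = (wf_fml V p \<and> wf_fml V q)"

fun peval :: "('v set \<Rightarrow> 'v set \<Rightarrow> bool) \<Rightarrow> 'v fml \<Rightarrow> bool" where
  "peval I Bot = False"
| "peval I (Rhd A B) = I A B"
| "peval I (Imp p q) = (peval I p \<longrightarrow> peval I q)"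

definition tautology :: "'v fml \<Rightarrow> bool" where
  "tautology p \<longleftrightarrow> (\<forall>I. peval I p)"

inductive derivable :: "'v set \<Rightarrow> ('v \<Rightarrow> 'v \<Rightarrow> bool) \<Rightarrow> 'v fml \<Rightarrow> bool"
  for V :: "'v set" and E :: "'v \<Rightarrow> 'v \<Rightarrow> bool" where
  taut: "wf_fml V p \<Longrightarrow> tautology p \<Longrightarrow> derivable V E p"
| refl: "A \<subseteq> V \<Longrightarrow> B \<subseteq> A \<Longrightarrow> derivable V E (Rhd A B)"
| aug: "A \<subseteq> V \<Longrightarrow> B \<subseteq> V \<Longrightarrow> C \<subseteq> V \<Longrightarrow>
          derivable V E (Imp (Rhd A B) (Rhd (A \<union> C) (B \<union> C)))"
| trans: "A \<subseteq> V \<Longrightarrow> B \<subseteq> V \<Longrightarrow> C \<subseteq> V \<Longrightarrow>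
          derivable V E (Imp (Rhd A B) (Imp (Rhd B C) (Rhd A C)))"
| contig: "A \<subseteq> V \<Longrightarrow> B \<subseteq> V \<Longrightarrow> C \<subseteq> V \<Longrightarrow> is_cut V U W \<Longrightarrow> A \<subseteq> U \<Longrightarrow> C \<subseteq> W \<Longrightarrow>
          derivable V E (Imp (Rhd (A \<union> B) C) (Rhd (border V E U \<union> border V E W \<union> B) C))"
| mp: "derivable V E (Imp p q) \<Longrightarrow> derivable V E p \<Longrightarrow> derivable V E q"

text \<open>Strategies are represented by natural numbers (any finite strategy set embeds in nat).
  A strategy profile is a function assigning to each player v in V a strategy in S v;
  it is fixed to 0 outside V so that profiles are determined by their values on V.\<close>

definition profiles :: "'v set \<Rightarrow> ('v \<Rightarrow> nat set) \<Rightarrow> ('v \<Rightarrow> nat) set" where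
  "profiles V S = {s. (\<forall>v \<in> V. s v \<in> S v) \<and> (\<forall>v. v \<notin> V \<longrightarrow> s v = 0)}"

definition agree_on :: "'v set \<Rightarrow> ('v \<Rightarrow> nat) \<Rightarrow> ('v \<Rightarrow> nat) \<Rightarrow> bool" where
  "agree_on X s t \<longleftrightarrow> (\<forall>x \<in> X. s x = t x)"

definition is_game :: "'v set \<Rightarrow> ('v \<Rightarrow> 'v \<Rightarrow> bool) \<Rightarrow> ('v \<Rightarrow> nat set)
                        \<Rightarrow> ('v \<Rightarrow> ('v \<Rightarrow> nat) \<Rightarrow> real) \<Rightarrow> bool" where
  "is_game V E S u \<longleftrightarrow> (\<forall>v \<in> V. finite (S v))
     \<and> (\<forall>v \<in> V. \<forall>s \<in> profiles V S. \<forall>t \<in> profiles V S.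
            agree_on (AdjPlus V E v) s t \<longrightarrow> u v s = u v t)"

definition NE :: "'v set \<Rightarrow> ('v \<Rightarrow> nat set) \<Rightarrow> ('v \<Rightarrow> ('v \<Rightarrow> nat) \<Rightarrow> real) \<Rightarrow> ('v \<Rightarrow> nat) set" where
  "NE V S u = {s \<in> profiles V S. \<forall>v \<in> V. \<forall>x \<in> S v. u v (s(v := x)) \<le> u v s}"

fun sat :: "'v set \<Rightarrow> ('v \<Rightarrow> nat set) \<Rightarrow> ('v \<Rightarrow> ('v \<Rightarrow> nat) \<Rightarrow> real) \<Rightarrow> 'v fml \<Rightarrow> bool" where
  "sat V S u Bot = False"
| "sat V S u (Rhd A B) = (\<forall>s \<in> NE V S u. \<forall>t \<in> NE V S u. agree_on A s t \<longrightarrow> agree_on B s t)"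
| "sat V S u (Imp p q) = (\<not> sat V S u p \<or> sat V S u q)"

end

theory Submission
  imports Defs "HOL-Library.Nat_Bijection"
begin

text \<open>A formula that is not derivable is falsified by a valuation \<open>I\<close> of the atoms \<open>A \<rhd> B\<close> that
  validates every theorem; such an \<open>I\<close> obeys Armstrong's axioms and contiguity.  Let \<open>X\<close> be the
  closure of a set \<open>P\<close> under \<open>I\<close> and \<open>D\<close> the component of a vertex \<open>q \<notin> X\<close> in \<open>V - X\<close> for the
  relation "at distance at most two".  Applying contiguity to the cut that separates \<open>D\<close> together
  with its neighbours from the rest shows that \<open>I\<close> never lets a set disjoint from \<open>D\<close> determine a
  vertex of \<open>D\<close>.  For each such \<open>D\<close> there is a binary game whose only Nash equilibria are the
  zero profile and the indicator of \<open>D\<close>; the sum of these games, played on subsets of the index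
  set, satisfies \<open>A \<rhd> B\<close> exactly when \<open>I A B\<close> holds, and hence falsifies the formula.\<close>

section \<open>Propositional completeness\<close>

lemma derivable_wf_fml: "derivable V E p \<Longrightarrow> wf_fml V p"
proof (induction rule: derivable.induct)
  case (contig A B C U W)
  then have "border V E U \<subseteq> V" "border V E W \<subseteq> V"
    unfolding border_def is_cut_def by blast+
  with contig show ?case by simp
qed auto

lemma peval_cong:
  "wf_fml V p \<Longrightarrow> (\<And>A B. A \<subseteq> V \<Longrightarrow> B \<subseteq> V \<Longrightarrow> I A B = J A B) \<Longrightarrow> peval I p = peval J p"
  by (induction p) auto

lemma peval_foldr_Imp: "peval I (foldr Imp ps q) \<longleftrightarrow> ((\<forall>p\<in>set ps. peval I p) \<longrightarrow> peval I q)"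
  by (induction ps) auto

lemma wf_fml_foldr_Imp: "wf_fml V (foldr Imp ps q) \<longleftrightarrow> (\<forall>p\<in>set ps. wf_fml V p) \<and> wf_fml V q"
  by (induction ps) auto

lemma derivable_foldr_Imp_mp:
  "\<forall>p\<in>set ps. derivable V E p \<Longrightarrow> derivable V E (foldr Imp ps q) \<Longrightarrow> derivable V E q"
  by (induction ps) (auto intro: derivable.mp)

text \<open>Only the finitely many valuations of the atoms over \<open>V\<close> matter, so a formula true under
  every valuation validating the theorems is implied by finitely many of them; that implication
  is a tautology.\<close>
lemma derivable_countermodel:
  assumes "finite V" and wf: "wf_fml V \<phi>" and "\<not> derivable V E \<phi>"
  shows "\<exists>I. (\<forall>\<psi>. derivable V E \<psi> \<longrightarrow> peval I \<psi>) \<and> \<not> peval I \<phi>"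
proof (rule ccontr)
  assume no_countermodel: "\<not> ?thesis"
  define F where "F = {R. R \<subseteq> Pow V \<times> Pow V \<and> \<not> peval (\<lambda>A B. (A, B) \<in> R) \<phi>}"
  have "finite F"
    by (rule finite_subset[of _ "Pow (Pow V \<times> Pow V)"]) (auto simp: F_def \<open>finite V\<close>)
  then obtain Rs where Rs: "set Rs = F"
    using finite_list by blast
  have "\<forall>R\<in>F. \<exists>\<psi>. derivable V E \<psi> \<and> \<not> peval (\<lambda>A B. (A, B) \<in> R) \<psi>"
  proof
    fix R assume "R \<in> F"
    then have "\<not> peval (\<lambda>A B. (A, B) \<in> R) \<phi>"
      unfolding F_def by simp
    with no_countermodel show "\<exists>\<psi>. derivable V E \<psi> \<and> \<not> peval (\<lambda>A B. (A, B) \<in> R) \<psi>"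
      by blast
  qed
  then obtain g where g: "\<And>R. R \<in> F \<Longrightarrow> derivable V E (g R) \<and> \<not> peval (\<lambda>A B. (A, B) \<in> R) (g R)"
    by metis
  define ps where "ps = map g Rs"
  have derivable_ps: "\<forall>p\<in>set ps. derivable V E p"
    using g Rs unfolding ps_def by auto
  have "tautology (foldr Imp ps \<phi>)"
    unfolding tautology_def peval_foldr_Imp
  proof (intro allI impI)
    fix I assume ps_true: "\<forall>p\<in>set ps. peval I p"
    define R where "R = {(A, B). A \<subseteq> V \<and> B \<subseteq> V \<and> I A B}"
    have I_R: "peval I p = peval (\<lambda>A B. (A, B) \<in> R) p" if "wf_fml V p" for p
      using that by (rule peval_cong) (auto simp: R_def)
    show "peval I \<phi>"
    proof (rule ccontr)
      assume "\<not> peval I \<phi>"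
      then have "R \<in> F"
        using I_R[OF wf] unfolding F_def R_def by auto
      then have "g R \<in> set ps" and "derivable V E (g R)" and "\<not> peval (\<lambda>A B. (A, B) \<in> R) (g R)"
        using g[of R] Rs unfolding ps_def by auto
      then show False
        using ps_true I_R[OF derivable_wf_fml] by blast
    qed
  qed
  then have "derivable V E (foldr Imp ps \<phi>)"
    using wf derivable_ps derivable_wf_fml by (intro derivable.taut) (auto simp: wf_fml_foldr_Imp)
  with derivable_ps \<open>\<not> derivable V E \<phi>\<close> show False
    using derivable_foldr_Imp_mp by blast
qed

lemma sat_iff_peval:
  assumes "\<And>P Q. P \<subseteq> V \<Longrightarrow> Q \<subseteq> V \<Longrightarrow> sat V S u (Rhd P Q) \<longleftrightarrow> I P Q"
  shows "wf_fml V \<phi> \<Longrightarrow> sat V S u \<phi> \<longleftrightarrow> peval I \<phi>"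
  using assms by (induction \<phi>) auto

section \<open>Contiguous dependence relations\<close>

lemma graph_edge_in_V: "graph V E \<Longrightarrow> E a b \<Longrightarrow> a \<in> V \<and> b \<in> V"
  unfolding graph_def by blast

lemma graph_edge_sym: "graph V E \<Longrightarrow> E a b \<Longrightarrow> E b a"
  unfolding graph_def by blast

definition near :: "('v \<Rightarrow> 'v \<Rightarrow> bool) \<Rightarrow> 'v \<Rightarrow> 'v \<Rightarrow> bool" where
  "near E a b \<longleftrightarrow> E a b \<or> (\<exists>y. E a y \<and> E y b)"

definition near_component :: "('v \<Rightarrow> 'v \<Rightarrow> bool) \<Rightarrow> 'v set \<Rightarrow> 'v \<Rightarrow> 'v set" where
  "near_component E Y v = {w. (\<lambda>a b. a \<in> Y \<and> b \<in> Y \<and> near E a b)\<^sup>*\<^sup>* v w}"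

lemma near_component_self: "v \<in> near_component E Y v"
  unfolding near_component_def by simp

lemma near_component_subset: "v \<in> Y \<Longrightarrow> near_component E Y v \<subseteq> Y"
  unfolding near_component_def by (auto elim: rtranclp.cases)

lemma near_component_step:
  "a \<in> near_component E Y v \<Longrightarrow> a \<in> Y \<Longrightarrow> b \<in> Y \<Longrightarrow> near E a b \<Longrightarrow> b \<in> near_component E Y v"
  unfolding near_component_def by (auto intro: rtranclp.rtrancl_into_rtrancl)

lemma near_component_induct [consumes 1, case_names self step]:
  assumes "w \<in> near_component E Y v" and "P v"
    and "\<And>a b. a \<in> near_component E Y v \<Longrightarrow> b \<in> near_component E Y v \<Longrightarrow> near E a b \<Longrightarrow> P a \<Longrightarrow> P b"
  shows "P w"
proof -
  have "(\<lambda>a b. a \<in> Y \<and> b \<in> Y \<and> near E a b)\<^sup>*\<^sup>* v w"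
    using assms(1) unfolding near_component_def by simp
  then show ?thesis
  proof (induction rule: rtranclp_induct)
    case (step a b)
    then have "a \<in> near_component E Y v" "b \<in> near_component E Y v"
      using near_component_step unfolding near_component_def by auto
    with step assms(3) show ?case by blast
  qed (rule assms(2))
qed

locale contiguous_dependence =
  fixes V :: "'v set" and E :: "'v \<Rightarrow> 'v \<Rightarrow> bool" and I :: "'v set \<Rightarrow> 'v set \<Rightarrow> bool"
  assumes graph: "graph V E"
    and dep_refl: "A \<subseteq> V \<Longrightarrow> B \<subseteq> A \<Longrightarrow> I A B"
    and dep_aug: "A \<subseteq> V \<Longrightarrow> B \<subseteq> V \<Longrightarrow> C \<subseteq> V \<Longrightarrow> I A B \<Longrightarrow> I (A \<union> C) (B \<union> C)"
    and dep_trans: "A \<subseteq> V \<Longrightarrow> B \<subseteq> V \<Longrightarrow> C \<subseteq> V \<Longrightarrow> I A B \<Longrightarrow> I B C \<Longrightarrow> I A C"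
    and dep_contig: "A \<subseteq> V \<Longrightarrow> B \<subseteq> V \<Longrightarrow> C \<subseteq> V \<Longrightarrow> is_cut V U W \<Longrightarrow> A \<subseteq> U \<Longrightarrow> C \<subseteq> W \<Longrightarrow>
          I (A \<union> B) C \<Longrightarrow> I (border V E U \<union> border V E W \<union> B) C"
begin

lemma finite_V: "finite V"
  using graph unfolding graph_def by blast

lemma dep_Un:
  assumes "P \<subseteq> V" "Q1 \<subseteq> V" "Q2 \<subseteq> V" "I P Q1" "I P Q2"
  shows "I P (Q1 \<union> Q2)"
proof -
  have "I P (P \<union> Q1)"
    using dep_aug[of P Q1 P] assms by (simp add: Un_commute)
  moreover have "I (P \<union> Q1) (Q2 \<union> Q1)"
    using dep_aug[of P Q2 Q1] assms by simp
  ultimately show ?thesis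
    using dep_trans[of P "P \<union> Q1" "Q2 \<union> Q1"] assms by (simp add: Un_commute)
qed

lemma dep_iff_singletons:
  assumes "P \<subseteq> V" "Q \<subseteq> V"
  shows "I P Q \<longleftrightarrow> (\<forall>q\<in>Q. I P {q})"
proof
  assume "I P Q"
  then show "\<forall>q\<in>Q. I P {q}"
    using assms dep_trans[of P Q] dep_refl[of Q] by blast
next
  have "finite Q"
    using assms(2) finite_V finite_subset by blast
  then show "\<forall>q\<in>Q. I P {q} \<Longrightarrow> I P Q"
    using assms(2)
  proof (induction Q rule: finite_induct)
    case empty
    then show ?case using dep_refl assms(1) by blast
  next
    case (insert q Q)
    then show ?case
      using dep_Un[of P "{q}" Q] assms(1) by simp
  qed
qed

definition closure :: "'v set \<Rightarrow> 'v set" where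
  "closure P = {w \<in> V. I P {w}}"

lemma closure_subset: "closure P \<subseteq> V"
  unfolding closure_def by blast

lemma subset_closure: "P \<subseteq> V \<Longrightarrow> P \<subseteq> closure P"
  unfolding closure_def using dep_refl by blast

lemma dep_closure: "P \<subseteq> V \<Longrightarrow> I P (closure P)"
  using dep_iff_singletons[of P "closure P"] closure_subset unfolding closure_def by blast

lemma closure_closed: "P \<subseteq> V \<Longrightarrow> w \<in> V \<Longrightarrow> I (closure P) {w} \<Longrightarrow> w \<in> closure P"
  using dep_trans[OF _ closure_subset, of P "{w}"] dep_closure unfolding closure_def by blast

text \<open>Cut \<open>V\<close> into \<open>W\<close>, the component \<open>D\<close> with its neighbours, and the rest \<open>U\<close>: since \<open>D\<close> is a
  component of \<open>V - X\<close> for the distance-two relation, every vertex of \<open>W - D\<close> and both borders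
  lie in \<open>X\<close>, so contiguity turns a dependence of \<open>d\<close> on \<open>V - D = U \<union> (W - D)\<close> into one on \<open>X\<close>.\<close>
lemma not_dep_near_component:
  assumes X: "X \<subseteq> V" and X_closed: "\<And>w. w \<in> V \<Longrightarrow> I X {w} \<Longrightarrow> w \<in> X"
    and v: "v \<in> V - X" and d: "d \<in> near_component E (V - X) v"
  shows "\<not> I (V - near_component E (V - X) v) {d}"
proof
  define D where "D = near_component E (V - X) v"
  assume dep_d: "I (V - D) {d}"
  have D: "D \<subseteq> V - X"
    using near_component_subset v unfolding D_def .
  have d: "d \<in> D"
    using d unfolding D_def .
  have D_step: "b \<in> D" if "a \<in> D" "b \<in> V - X" "near E a b" for a b
    using near_component_step[of a E "V - X" v b] that D unfolding D_def by blast
  define W where "W = D \<union> {y \<in> V. \<exists>a\<in>D. E a y}"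
  define U where "U = V - W"
  have W: "W \<subseteq> V"
    using D unfolding W_def by blast
  have cut: "is_cut V U W"
    using W unfolding is_cut_def U_def by blast
  have W_D: "W - D \<subseteq> X"
  proof
    fix y assume "y \<in> W - D"
    then obtain a where "a \<in> D" "E a y" "y \<in> V" "y \<notin> D"
      unfolding W_def by blast
    then show "y \<in> X"
      using D_step[of a y] unfolding near_def by blast
  qed
  have border_W: "border V E W \<subseteq> X"
  proof
    fix x assume "x \<in> border V E W"
    then obtain w where "x \<in> W" "w \<in> V" "w \<notin> W" "E x w"
      unfolding border_def by blast
    then have "x \<in> W - D"
      unfolding W_def by blast
    with W_D show "x \<in> X" by blast
  qed
  have border_U: "border V E U \<subseteq> X"
  proof
    fix u assume "u \<in> border V E U"
    then obtain w where w: "w \<in> W" "E u w" and u: "u \<in> V" "u \<notin> W"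
      unfolding border_def U_def by blast
    then have "w \<notin> D"
      using graph_edge_sym[OF graph] unfolding W_def by blast
    then obtain a where a: "a \<in> D" "E a w"
      using w unfolding W_def by blast
    have "u \<notin> D"
      using u unfolding W_def by blast
    moreover have "near E a u"
      using a w graph_edge_sym[OF graph] unfolding near_def by blast
    ultimately show "u \<in> X"
      using D_step[of a u] a u by blast
  qed
  define Z where "Z = border V E U \<union> border V E W \<union> (W - D)"
  have "I Z {d}"
    unfolding Z_def
  proof (rule dep_contig[OF _ _ _ cut])
    have "U \<union> (W - D) = V - D"
      using W unfolding U_def W_def by blast
    then show "I (U \<union> (W - D)) {d}"
      using dep_d by simp
  qed (use W d in \<open>auto simp: U_def W_def\<close>)
  moreover have Z: "Z \<subseteq> X"
    using W_D border_W border_U unfolding Z_def by blast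
  moreover have "{d} \<subseteq> V"
    using d D by blast
  ultimately have "I X {d}"
    using dep_trans[OF X _ _ dep_refl[OF X Z]] X by blast
  then show False
    using X_closed d D by blast
qed

lemma dep_preserves_disjoint_near_component:
  assumes X: "X \<subseteq> V" and X_closed: "\<And>w. w \<in> V \<Longrightarrow> I X {w} \<Longrightarrow> w \<in> X" and v: "v \<in> V - X"
    and Q: "Q1 \<subseteq> V" "Q2 \<subseteq> V" "I Q1 Q2" and disjoint: "Q1 \<inter> near_component E (V - X) v = {}"
  shows "Q2 \<inter> near_component E (V - X) v = {}"
proof (rule ccontr)
  define D where "D = near_component E (V - X) v"
  assume "Q2 \<inter> near_component E (V - X) v \<noteq> {}"
  then obtain q where q: "q \<in> Q2" "q \<in> D"
    unfolding D_def by blast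
  have VD: "V - D \<subseteq> V" by blast
  have "I (V - D) Q1"
    using dep_refl[OF VD] disjoint Q(1) unfolding D_def by blast
  then have "I (V - D) Q2"
    using dep_trans[OF VD Q(1,2)] Q(3) by blast
  moreover have "I Q2 {q}"
    using dep_refl[OF Q(2)] q(1) by blast
  ultimately have "I (V - D) {q}"
    using dep_trans[OF VD Q(2)] q Q(2) by blast
  then show False
    using not_dep_near_component[OF X X_closed v] q(2) unfolding D_def by blast
qed

definition critical_sets :: "'v set set" where
  "critical_sets = {near_component E (V - closure P) q | P q. P \<subseteq> V \<and> q \<in> V - closure P}"

lemma critical_setE:
  assumes "D \<in> critical_sets"
  obtains P q where "P \<subseteq> V" "q \<in> V - closure P" "D = near_component E (V - closure P) q"
  using assms unfolding critical_sets_def by blast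

lemma finite_critical_sets: "finite critical_sets"
proof (rule finite_subset)
  show "critical_sets \<subseteq> Pow V"
  proof
    fix D assume "D \<in> critical_sets"
    then obtain P q where "q \<in> V - closure P" "D = near_component E (V - closure P) q"
      by (rule critical_setE)
    then show "D \<in> Pow V"
      using near_component_subset[of q "V - closure P" E] by blast
  qed
qed (simp add: finite_V)

lemma dep_iff_critical_sets:
  assumes P: "P \<subseteq> V" and Q: "Q \<subseteq> V"
  shows "I P Q \<longleftrightarrow> (\<forall>D\<in>critical_sets. P \<inter> D = {} \<longrightarrow> Q \<inter> D = {})"
proof
  assume "I P Q"
  then show "\<forall>D\<in>critical_sets. P \<inter> D = {} \<longrightarrow> Q \<inter> D = {}"
  proof (intro ballI impI)
    fix D assume "D \<in> critical_sets" and "P \<inter> D = {}"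
    from \<open>D \<in> critical_sets\<close> obtain P' q where "P' \<subseteq> V" "q \<in> V - closure P'" "D = near_component E (V - closure P') q"
      by (rule critical_setE)
    with \<open>I P Q\<close> \<open>P \<inter> D = {}\<close> P Q show "Q \<inter> D = {}"
      using dep_preserves_disjoint_near_component[OF closure_subset closure_closed] by blast
  qed
next
  assume preserved: "\<forall>D\<in>critical_sets. P \<inter> D = {} \<longrightarrow> Q \<inter> D = {}"
  show "I P Q"
  proof (rule ccontr)
    assume "\<not> I P Q"
    then obtain q where q: "q \<in> Q" "q \<in> V - closure P"
      using dep_iff_singletons[OF P Q] Q unfolding closure_def by blast
    define D where "D = near_component E (V - closure P) q"
    have "D \<in> critical_sets"
      using P q unfolding critical_sets_def D_def by auto
    moreover have "P \<inter> D = {}"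
      using near_component_subset[of q "V - closure P"] subset_closure[OF P] q unfolding D_def by blast
    moreover have "q \<in> Q \<inter> D"
      using q near_component_self unfolding D_def by auto
    ultimately show False
      using preserved by blast
  qed
qed

end

section \<open>A game with two equilibria\<close>

lemma profiles_in: "s \<in> profiles V S \<Longrightarrow> w \<in> V \<Longrightarrow> s w \<in> S w"
  unfolding profiles_def by simp

lemma profiles_outside: "s \<in> profiles V S \<Longrightarrow> w \<notin> V \<Longrightarrow> s w = 0"
  unfolding profiles_def by simp

lemma NE_profile: "s \<in> NE V S u \<Longrightarrow> s \<in> profiles V S"
  unfolding NE_def by blast

lemma NE_deviation: "s \<in> NE V S u \<Longrightarrow> w \<in> V \<Longrightarrow> x \<in> S w \<Longrightarrow> u w (s(w := x)) \<le> u w s"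
  unfolding NE_def by blast

definition nonconstant_on :: "'a set \<Rightarrow> ('a \<Rightarrow> 'b) \<Rightarrow> bool" where
  "nonconstant_on A s \<longleftrightarrow> (\<exists>a\<in>A. \<exists>c\<in>A. s a \<noteq> s c)"

lemma nonconstant_on_cong: "(\<And>a. a \<in> A \<Longrightarrow> s a = t a) \<Longrightarrow> nonconstant_on A s = nonconstant_on A t"
  unfolding nonconstant_on_def by auto

abbreviation binary_strategies :: "'v \<Rightarrow> nat set" where
  "binary_strategies \<equiv> \<lambda>_. {0, 1}"

text \<open>When \<open>D\<close> is connected at distance two,
  the equilibria are the all-\<open>0\<close> profile and the indicator of \<open>D\<close>.\<close>
definition block_payoff :: "'v set \<Rightarrow> ('v \<Rightarrow> 'v \<Rightarrow> bool) \<Rightarrow> 'v set \<Rightarrow> 'v \<Rightarrow> ('v \<Rightarrow> nat) \<Rightarrow> real" where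
  "block_payoff V E D w s =
     (if w \<in> D then (if \<exists>y\<in>Adj V E w. s y = 1 then real (s w) else 0)
      else of_bool (s w = 1 \<longleftrightarrow> nonconstant_on (Adj V E w \<inter> D) s))"

lemma block_payoff_cong:
  assumes "s w = t w" and "\<And>y. y \<in> Adj V E w \<Longrightarrow> s y = t y"
  shows "block_payoff V E D w s = block_payoff V E D w t"
proof -
  have "(\<exists>y\<in>Adj V E w. s y = 1) = (\<exists>y\<in>Adj V E w. t y = 1)"
    using assms(2) by auto
  moreover have "nonconstant_on (Adj V E w \<inter> D) s = nonconstant_on (Adj V E w \<inter> D) t"
    using assms(2) by (intro nonconstant_on_cong) simp
  ultimately show ?thesis
    unfolding block_payoff_def assms(1) by (simp only:)
qed

lemma block_payoff_fun_upd:
  assumes "graph V E"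
  shows "block_payoff V E D w (s(w := x)) =
     (if w \<in> D then (if \<exists>y\<in>Adj V E w. s y = 1 then real x else 0)
      else of_bool (x = 1 \<longleftrightarrow> nonconstant_on (Adj V E w \<inter> D) s))"
proof -
  have "w \<notin> Adj V E w"
    using assms unfolding graph_def Adj_def by blast
  then have neighbours: "(s(w := x)) y = s y" if "y \<in> Adj V E w" for y
    using that by auto
  have "(\<exists>y\<in>Adj V E w. (s(w := x)) y = 1) = (\<exists>y\<in>Adj V E w. s y = 1)"
    using neighbours by auto
  moreover have "nonconstant_on (Adj V E w \<inter> D) (s(w := x)) = nonconstant_on (Adj V E w \<inter> D) s"
    using neighbours by (intro nonconstant_on_cong) simp
  ultimately show ?thesis
    unfolding block_payoff_def by (simp only: fun_upd_same)
qed

lemma block_payoff_game: "is_game V E binary_strategies (block_payoff V E D)"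
  unfolding is_game_def
proof (intro conjI ballI impI)
  fix w s t assume "agree_on (AdjPlus V E w) s t"
  then show "block_payoff V E D w s = block_payoff V E D w t"
    unfolding agree_on_def AdjPlus_def by (intro block_payoff_cong) auto
qed auto

context
  fixes V :: "'v set" and E :: "'v \<Rightarrow> 'v \<Rightarrow> bool" and D :: "'v set"
  assumes graph: "graph V E" and D: "D \<subseteq> V"
begin

lemma zero_in_NE_block_payoff: "(\<lambda>_. 0) \<in> NE V binary_strategies (block_payoff V E D)"
  unfolding NE_def
proof (intro CollectI conjI ballI)
  fix w x assume "x \<in> {0::nat, 1}"
  moreover have "\<not> nonconstant_on A (\<lambda>_. 0 :: nat)" for A
    unfolding nonconstant_on_def by simp
  ultimately show "block_payoff V E D w ((\<lambda>_. 0)(w := x)) \<le> block_payoff V E D w (\<lambda>_. 0)"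
    unfolding block_payoff_fun_upd[OF graph] by (auto simp: block_payoff_def)
qed (auto simp: profiles_def)

lemma indicator_in_NE_block_payoff:
  "(\<lambda>w. if w \<in> D then 1 else 0) \<in> NE V binary_strategies (block_payoff V E D)"
  unfolding NE_def
proof (intro CollectI conjI ballI)
  fix w x assume "x \<in> {0::nat, 1}"
  moreover have "\<not> nonconstant_on (A \<inter> D) (\<lambda>w. if w \<in> D then 1 else 0 :: nat)" for A
    unfolding nonconstant_on_def by simp
  ultimately show "block_payoff V E D w ((\<lambda>w. if w \<in> D then 1 else 0)(w := x))
      \<le> block_payoff V E D w (\<lambda>w. if w \<in> D then 1 else 0)"
    unfolding block_payoff_fun_upd[OF graph] by (auto simp: block_payoff_def)
qed (use D in \<open>auto simp: profiles_def\<close>)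

context
  fixes s assumes s: "s \<in> NE V binary_strategies (block_payoff V E D)"
begin

lemma block_NE_binary: "w \<in> V \<Longrightarrow> s w = 0 \<or> s w = 1"
  using NE_profile[OF s] unfolding profiles_def by auto

lemma block_NE_outside:
  assumes "w \<in> V" "w \<notin> D"
  shows "s w = 1 \<longleftrightarrow> nonconstant_on (Adj V E w \<inter> D) s"
proof (rule ccontr)
  assume wrong: "\<not> (s w = 1 \<longleftrightarrow> nonconstant_on (Adj V E w \<inter> D) s)"
  define x :: nat where "x = of_bool (nonconstant_on (Adj V E w \<inter> D) s)"
  have "block_payoff V E D w (s(w := x)) = 1"
    using assms unfolding block_payoff_fun_upd[OF graph] x_def by simp
  moreover have "block_payoff V E D w s = 0"
    using assms wrong unfolding block_payoff_def by simp
  moreover have "x \<in> {0, 1}"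
    unfolding x_def by simp
  ultimately show False
    using NE_deviation[OF s \<open>w \<in> V\<close>, of x] by simp
qed

lemma block_NE_inside:
  assumes d: "d \<in> D" "s d = 0" and y: "y \<in> Adj V E d"
  shows "s y = 0"
proof (rule ccontr)
  assume "s y \<noteq> 0"
  then have "s y = 1"
    using block_NE_binary[of y] y unfolding Adj_def by auto
  then have "block_payoff V E D d (s(d := 1)) = 1"
    using d y unfolding block_payoff_fun_upd[OF graph] by auto
  moreover have "block_payoff V E D d s = 0"
    using d unfolding block_payoff_def by simp
  moreover have "d \<in> V"
    using d D by blast
  ultimately show False
    using NE_deviation[OF s, of d 1] by simp
qed

text \<open>If the middle vertex of a path \<open>a, y, b\<close> lies outside \<open>D\<close>, it would have to play \<open>1\<close> next to
  \<open>a\<close> playing \<open>0\<close>.\<close>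
lemma block_NE_near:
  assumes ab: "a \<in> D" "b \<in> D" "near E a b" and "s a = 0"
  shows "s b = 0"
proof (cases "E a b")
  case True
  then show ?thesis
    using block_NE_inside[OF \<open>a \<in> D\<close> \<open>s a = 0\<close>] graph_edge_in_V[OF graph] unfolding Adj_def by blast
next
  case False
  then obtain y where y: "E a y" "E y b"
    using ab unfolding near_def by blast
  then have y_Adj: "y \<in> Adj V E a" "a \<in> Adj V E y" "b \<in> Adj V E y"
    using graph_edge_in_V[OF graph] graph_edge_sym[OF graph] unfolding Adj_def by auto
  have "s y = 0"
    using block_NE_inside[OF \<open>a \<in> D\<close> \<open>s a = 0\<close> y_Adj(1)] .
  show ?thesis
  proof (cases "y \<in> D")
    case True
    show ?thesis
      using block_NE_inside[OF True \<open>s y = 0\<close> y_Adj(3)] .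
  next
    case False
    then have "\<not> nonconstant_on (Adj V E y \<inter> D) s"
      using block_NE_outside[of y] \<open>s y = 0\<close> graph_edge_in_V[OF graph y(1)] by simp
    then have "s b = s a"
      using y_Adj(2,3) ab(1,2) unfolding nonconstant_on_def by blast
    with \<open>s a = 0\<close> show ?thesis by simp
  qed
qed

lemma block_NE_near_eq:
  assumes ab: "a \<in> D" "b \<in> D" "near E a b"
  shows "s b = s a"
proof (cases "s a = 0")
  case True
  then show ?thesis
    using block_NE_near[OF ab] by simp
next
  case False
  have "near E b a"
    using ab(3) graph_edge_sym[OF graph] unfolding near_def by blast
  with False have "s b \<noteq> 0"
    using block_NE_near[OF ab(2,1)] by auto
  moreover have "a \<in> V" "b \<in> V"
    using ab D by blast+
  ultimately show ?thesis
    using False block_NE_binary by metis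
qed

context
  fixes Y v assumes D_component: "D = near_component E Y v"
begin

lemma block_NE_constant: "w \<in> D \<Longrightarrow> s w = s v"
  unfolding D_component
proof (induction rule: near_component_induct)
  case (step a b)
  then show ?case
    using block_NE_near_eq unfolding D_component by simp
qed simp

lemma block_NE_zero_outside:
  assumes "w \<notin> D"
  shows "s w = 0"
proof (cases "w \<in> V")
  case True
  have "\<not> nonconstant_on (Adj V E w \<inter> D) s"
    using block_NE_constant unfolding nonconstant_on_def by auto
  then have "s w \<noteq> 1"
    using block_NE_outside[OF True assms] by blast
  then show ?thesis
    using block_NE_binary[OF True] by blast
next
  case False
  then show ?thesis
    by (rule profiles_outside[OF NE_profile[OF s]])
qed

lemma block_NE_cases: "s = (\<lambda>_. 0) \<or> s = (\<lambda>w. if w \<in> D then 1 else 0)"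
proof -
  have "v \<in> V"
    using D near_component_self[of v E Y] D_component by blast
  then consider "s v = 0" | "s v = 1"
    using block_NE_binary by metis
  then show ?thesis
  proof cases
    case 1
    have "s = (\<lambda>_. 0)"
    proof
      fix w show "s w = 0"
        using block_NE_constant[of w] block_NE_zero_outside[of w] 1 by (cases "w \<in> D") simp_all
    qed
    then show ?thesis ..
  next
    case 2
    have "s = (\<lambda>w. if w \<in> D then 1 else 0)"
    proof
      fix w show "s w = (if w \<in> D then 1 else 0)"
        using block_NE_constant[of w] block_NE_zero_outside[of w] 2 by (cases "w \<in> D") simp_all
    qed
    then show ?thesis ..
  qed
qed

end

end

lemma NE_block_payoff:
  assumes "D = near_component E Y v"
  shows "NE V binary_strategies (block_payoff V E D) = {\<lambda>_. 0, \<lambda>w. if w \<in> D then 1 else 0}"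
proof
  show "NE V binary_strategies (block_payoff V E D) \<subseteq> {\<lambda>_. 0, \<lambda>w. if w \<in> D then 1 else 0}"
    using block_NE_cases[OF _ assms] by blast
qed (use zero_in_NE_block_payoff indicator_in_NE_block_payoff in simp)

lemma sat_block_payoff_Rhd:
  assumes "D = near_component E Y v"
  shows "sat V binary_strategies (block_payoff V E D) (Rhd P Q) \<longleftrightarrow> (P \<inter> D = {} \<longrightarrow> Q \<inter> D = {})"
proof -
  have "agree_on X (\<lambda>_. 0) (\<lambda>w. if w \<in> D then 1 else 0) \<longleftrightarrow> X \<inter> D = {}"
    and "agree_on X (\<lambda>w. if w \<in> D then 1 else 0) (\<lambda>_. 0) \<longleftrightarrow> X \<inter> D = {}"
    and "agree_on X t t" for X and t :: "'v \<Rightarrow> nat"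
    unfolding agree_on_def by auto
  then show ?thesis
    unfolding sat.simps NE_block_payoff[OF assms] by simp
qed

end

section \<open>Sums of binary games\<close>

text \<open>A strategy in the sum of \<open>n\<close> binary games is a subset of \<open>{..<n}\<close>, encoded as a natural number:
  the set of games in which the player plays \<open>1\<close>.\<close>
definition subset_strategies :: "nat \<Rightarrow> 'v \<Rightarrow> nat set" where
  "subset_strategies n = (\<lambda>_. set_encode ` Pow {..<n})"

definition layer :: "'v set \<Rightarrow> nat \<Rightarrow> ('v \<Rightarrow> nat) \<Rightarrow> 'v \<Rightarrow> nat" where
  "layer V i s = (\<lambda>w. if w \<in> V \<and> i \<in> set_decode (s w) then 1 else 0)"

definition sum_payoff :: "'v set \<Rightarrow> nat \<Rightarrow> (nat \<Rightarrow> 'v \<Rightarrow> ('v \<Rightarrow> nat) \<Rightarrow> real) \<Rightarrow> 'v \<Rightarrow> ('v \<Rightarrow> nat) \<Rightarrow> real" where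
  "sum_payoff V n u w s = (\<Sum>i<n. u i w (layer V i s))"

definition stack :: "'v set \<Rightarrow> nat \<Rightarrow> (nat \<Rightarrow> 'v \<Rightarrow> nat) \<Rightarrow> 'v \<Rightarrow> nat" where
  "stack V n c = (\<lambda>w. if w \<in> V then set_encode {i. i < n \<and> c i w = 1} else 0)"

lemma set_decode_subset_strategies: "x \<in> subset_strategies n w \<Longrightarrow> set_decode x \<subseteq> {..<n}"
  unfolding subset_strategies_def by (auto simp: finite_subset)

lemma set_encode_in_subset_strategies: "T \<subseteq> {..<n} \<Longrightarrow> set_encode T \<in> subset_strategies n w"
  unfolding subset_strategies_def by blast

lemma layer_in_profiles: "layer V i s \<in> profiles V binary_strategies"
  unfolding profiles_def layer_def by auto

lemma layer_fun_upd:
  "w \<in> V \<Longrightarrow> layer V i (s(w := x)) = (layer V i s)(w := of_bool (i \<in> set_decode x))"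
  unfolding layer_def by (rule ext) auto

lemma stack_in_profiles: "stack V n c \<in> profiles V (subset_strategies n)"
  unfolding profiles_def stack_def by (auto intro: set_encode_in_subset_strategies)

lemma layer_stack:
  assumes "c i \<in> profiles V binary_strategies" "i < n"
  shows "layer V i (stack V n c) = c i"
proof
  fix w
  have "finite {i. i < n \<and> c i w = 1}" by simp
  then show "layer V i (stack V n c) w = c i w"
    using assms unfolding layer_def stack_def profiles_def by auto
qed

lemma sum_payoff_game:
  assumes "\<And>i. i < n \<Longrightarrow> is_game V E binary_strategies (u i)"
  shows "is_game V E (subset_strategies n) (sum_payoff V n u)"
  unfolding is_game_def
proof (intro conjI ballI impI)
  fix w s t assume w: "w \<in> V" and "agree_on (AdjPlus V E w) s t"
  then have "agree_on (AdjPlus V E w) (layer V i s) (layer V i t)" for i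
    unfolding agree_on_def layer_def by auto
  then have "u i w (layer V i s) = u i w (layer V i t)" if "i < n" for i
    using assms[OF that] w layer_in_profiles unfolding is_game_def by blast
  then show "sum_payoff V n u w s = sum_payoff V n u w t"
    unfolding sum_payoff_def by (intro sum.cong) auto
qed (simp add: subset_strategies_def)

lemma agree_on_iff_layers:
  assumes s: "s \<in> profiles V (subset_strategies n)" and t: "t \<in> profiles V (subset_strategies n)"
  shows "agree_on Q s t \<longleftrightarrow> (\<forall>i<n. agree_on Q (layer V i s) (layer V i t))"
proof -
  have "s w = t w \<longleftrightarrow> (\<forall>i<n. layer V i s w = layer V i t w)" for w
  proof (cases "w \<in> V")
    case True
    have "set_decode (s w) \<subseteq> {..<n}" "set_decode (t w) \<subseteq> {..<n}"
      by (rule set_decode_subset_strategies[OF profiles_in[OF s True]],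
          rule set_decode_subset_strategies[OF profiles_in[OF t True]])
    then have "set_decode (s w) = set_decode (t w) \<longleftrightarrow>
        (\<forall>i<n. i \<in> set_decode (s w) \<longleftrightarrow> i \<in> set_decode (t w))"
      by blast
    moreover have "s w = t w \<longleftrightarrow> set_decode (s w) = set_decode (t w)"
      by (metis set_decode_inverse)
    moreover have "layer V i s w = layer V i t w \<longleftrightarrow> (i \<in> set_decode (s w) \<longleftrightarrow> i \<in> set_decode (t w))" for i
      using True unfolding layer_def by simp
    ultimately show ?thesis
      by simp
  next
    case False
    then show ?thesis
      using profiles_outside[OF s] profiles_outside[OF t] unfolding layer_def by simp
  qed
  then show ?thesis
    unfolding agree_on_def by blast
qed

lemma layer_deviation:
  assumes s: "s \<in> profiles V (subset_strategies n)" and w: "w \<in> V" and i: "i < n"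
    and y: "y \<in> {0, 1}"
  obtains x where "x \<in> subset_strategies n w"
    and "layer V i (s(w := x)) = (layer V i s)(w := y)"
    and "\<And>j. j \<noteq> i \<Longrightarrow> layer V j (s(w := x)) = layer V j s"
proof -
  define T where "T = set_decode (s w)"
  have T: "T \<subseteq> {..<n}"
    unfolding T_def by (rule set_decode_subset_strategies[OF profiles_in[OF s w]])
  define T' where "T' = (if y = 1 then insert i T else T - {i})"
  have T': "T' \<subseteq> {..<n}"
    using T i unfolding T'_def by auto
  then have decode: "set_decode (set_encode T') = T'"
    using finite_subset by (intro set_encode_inverse) blast
  have "layer V i (s(w := set_encode T')) = (layer V i s)(w := y)"
    unfolding layer_fun_upd[OF w] decode using y unfolding T'_def by auto
  moreover have "layer V j (s(w := set_encode T')) = layer V j s" if "j \<noteq> i" for j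
  proof -
    have "of_bool (j \<in> T') = layer V j s w"
      using w that unfolding T'_def T_def layer_def by auto
    then show ?thesis
      unfolding layer_fun_upd[OF w] decode by (simp add: fun_upd_idem)
  qed
  ultimately show thesis
    using that[OF set_encode_in_subset_strategies[OF T']] by blast
qed

lemma sum_payoff_change_one_layer:
  assumes "i < n" and "\<And>j. j \<noteq> i \<Longrightarrow> layer V j t = layer V j s"
  shows "sum_payoff V n u w t - sum_payoff V n u w s = u i w (layer V i t) - u i w (layer V i s)"
proof -
  have "sum_payoff V n u w t = u i w (layer V i t) + (\<Sum>j\<in>{..<n} - {i}. u j w (layer V j t))"
    "sum_payoff V n u w s = u i w (layer V i s) + (\<Sum>j\<in>{..<n} - {i}. u j w (layer V j s))"
    unfolding sum_payoff_def using assms(1) by (simp_all add: sum.remove)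
  moreover have "(\<Sum>j\<in>{..<n} - {i}. u j w (layer V j t)) = (\<Sum>j\<in>{..<n} - {i}. u j w (layer V j s))"
    using assms(2) by (intro sum.cong) auto
  ultimately show ?thesis by simp
qed

lemma NE_sum_payoff_iff:
  assumes s: "s \<in> profiles V (subset_strategies n)"
  shows "s \<in> NE V (subset_strategies n) (sum_payoff V n u) \<longleftrightarrow>
    (\<forall>i<n. layer V i s \<in> NE V binary_strategies (u i))"
proof
  assume NE: "s \<in> NE V (subset_strategies n) (sum_payoff V n u)"
  show "\<forall>i<n. layer V i s \<in> NE V binary_strategies (u i)"
  proof (intro allI impI)
    fix i assume i: "i < n"
    show "layer V i s \<in> NE V binary_strategies (u i)"
      unfolding NE_def
    proof (intro CollectI conjI ballI layer_in_profiles)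
      fix w y assume w: "w \<in> V" and y: "y \<in> {0::nat, 1}"
      obtain x where x: "x \<in> subset_strategies n w"
        and layer_i: "layer V i (s(w := x)) = (layer V i s)(w := y)"
        and layer_j: "\<And>j. j \<noteq> i \<Longrightarrow> layer V j (s(w := x)) = layer V j s"
        using layer_deviation[OF s w i y] by blast
      have "sum_payoff V n u w (s(w := x)) \<le> sum_payoff V n u w s"
        using NE_deviation[OF NE w x] .
      then show "u i w ((layer V i s)(w := y)) \<le> u i w (layer V i s)"
        using sum_payoff_change_one_layer[OF i layer_j, of u w] layer_i by simp
    qed
  qed
next
  assume layers_NE: "\<forall>i<n. layer V i s \<in> NE V binary_strategies (u i)"
  show "s \<in> NE V (subset_strategies n) (sum_payoff V n u)"
    unfolding NE_def
  proof (intro CollectI conjI ballI s)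
    fix w x assume w: "w \<in> V"
    have "u i w (layer V i (s(w := x))) \<le> u i w (layer V i s)" if "i < n" for i
    proof -
      have "layer V i s \<in> NE V binary_strategies (u i)"
        using layers_NE that by blast
      moreover have "of_bool (i \<in> set_decode x) \<in> {0::nat, 1}"
        by simp
      ultimately show ?thesis
        unfolding layer_fun_upd[OF w] by (rule NE_deviation[OF _ w])
    qed
    then show "sum_payoff V n u w (s(w := x)) \<le> sum_payoff V n u w s"
      unfolding sum_payoff_def by (intro sum_mono) simp
  qed
qed

section \<open>Realising a dependence relation by a game\<close>

lemma stack_single_in_NE:
  assumes zero: "\<forall>j<n. (\<lambda>_. 0) \<in> NE V binary_strategies (u j)"
    and i: "i < n" and a: "a \<in> NE V binary_strategies (u i)"
  shows "stack V n (\<lambda>j. if j = i then a else (\<lambda>_. 0)) \<in> NE V (subset_strategies n) (sum_payoff V n u)"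
    and "j < n \<Longrightarrow> layer V j (stack V n (\<lambda>j. if j = i then a else (\<lambda>_. 0))) = (if j = i then a else (\<lambda>_. 0))"
proof -
  let ?c = "\<lambda>j. if j = i then a else (\<lambda>_. 0)"
  have c_NE: "?c j \<in> NE V binary_strategies (u j)" if "j < n" for j
    using zero that a by simp
  show layers: "layer V j (stack V n ?c) = ?c j" if "j < n" for j
    by (rule layer_stack[where c = ?c, OF NE_profile[OF c_NE[OF that]] that])
  show "stack V n ?c \<in> NE V (subset_strategies n) (sum_payoff V n u)"
    using c_NE layers by (simp add: NE_sum_payoff_iff[OF stack_in_profiles])
qed

lemma sat_summand_if_sat_sum_payoff:
  assumes zero: "\<forall>j<n. (\<lambda>_. 0) \<in> NE V binary_strategies (u j)"
    and sum_sat: "sat V (subset_strategies n) (sum_payoff V n u) (Rhd P Q)" and i: "i < n"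
  shows "sat V binary_strategies (u i) (Rhd P Q)"
  unfolding sat.simps
proof (intro ballI impI)
  fix a b assume a: "a \<in> NE V binary_strategies (u i)" and b: "b \<in> NE V binary_strategies (u i)"
    and "agree_on P a b"
  define ca where "ca = (\<lambda>j. if j = i then a else (\<lambda>_. 0 :: nat))"
  define cb where "cb = (\<lambda>j. if j = i then b else (\<lambda>_. 0 :: nat))"
  note A = stack_single_in_NE[OF zero i a, folded ca_def]
  note B = stack_single_in_NE[OF zero i b, folded cb_def]
  have "agree_on P (layer V j (stack V n ca)) (layer V j (stack V n cb))" if "j < n" for j
    using \<open>agree_on P a b\<close> A(2)[OF that] B(2)[OF that]
    unfolding ca_def cb_def agree_on_def by simp
  then have "agree_on P (stack V n ca) (stack V n cb)"
    by (simp add: agree_on_iff_layers[OF stack_in_profiles stack_in_profiles])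
  then have "agree_on Q (stack V n ca) (stack V n cb)"
    using sum_sat A(1) B(1) by simp
  then have "agree_on Q (layer V i (stack V n ca)) (layer V i (stack V n cb))"
    using agree_on_iff_layers[OF stack_in_profiles stack_in_profiles] i by blast
  then show "agree_on Q a b"
    using A(2)[OF i] B(2)[OF i] unfolding ca_def cb_def by simp
qed

lemma sat_sum_payoff_if_summands:
  assumes summands_sat: "\<forall>i<n. sat V binary_strategies (u i) (Rhd P Q)"
  shows "sat V (subset_strategies n) (sum_payoff V n u) (Rhd P Q)"
  unfolding sat.simps
proof (intro ballI impI)
  fix s t assume s: "s \<in> NE V (subset_strategies n) (sum_payoff V n u)"
    and t: "t \<in> NE V (subset_strategies n) (sum_payoff V n u)" and "agree_on P s t"
  note s_prof = NE_profile[OF s] and t_prof = NE_profile[OF t]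
  have "agree_on Q (layer V i s) (layer V i t)" if i: "i < n" for i
  proof -
    have "layer V i s \<in> NE V binary_strategies (u i)" "layer V i t \<in> NE V binary_strategies (u i)"
      using s t i NE_sum_payoff_iff[OF s_prof] NE_sum_payoff_iff[OF t_prof] by blast+
    moreover have "agree_on P (layer V i s) (layer V i t)"
      using \<open>agree_on P s t\<close> i agree_on_iff_layers[OF s_prof t_prof] by blast
    ultimately show ?thesis
      using summands_sat i by simp
  qed
  then show "agree_on Q s t"
    using agree_on_iff_layers[OF s_prof t_prof] by blast
qed

lemma sat_sum_payoff_Rhd:
  assumes "\<forall>i<n. (\<lambda>_. 0) \<in> NE V binary_strategies (u i)"
  shows "sat V (subset_strategies n) (sum_payoff V n u) (Rhd P Q) \<longleftrightarrow>
    (\<forall>i<n. sat V binary_strategies (u i) (Rhd P Q))"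
  using sat_summand_if_sat_sum_payoff[OF assms] sat_sum_payoff_if_summands by blast

context contiguous_dependence
begin

lemma game_realising_dependence:
  "\<exists>S u. is_game V E S u \<and> (\<forall>P Q. P \<subseteq> V \<longrightarrow> Q \<subseteq> V \<longrightarrow> sat V S u (Rhd P Q) = I P Q)"
proof -
  obtain Ds where Ds: "set Ds = critical_sets"
    using finite_list[OF finite_critical_sets] by blast
  define n where "n = length Ds"
  define u where "u i = block_payoff V E (Ds ! i)" for i
  have u_i: "(\<lambda>_. 0) \<in> NE V binary_strategies (u i)
      \<and> (\<forall>P Q. sat V binary_strategies (u i) (Rhd P Q) \<longleftrightarrow> (P \<inter> Ds ! i = {} \<longrightarrow> Q \<inter> Ds ! i = {}))"
    if "i < n" for i
  proof -
    have "Ds ! i \<in> critical_sets"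
      using Ds that unfolding n_def by (metis nth_mem)
    then obtain P q where q: "q \<in> V - closure P" and Ds_i: "Ds ! i = near_component E (V - closure P) q"
      by (rule critical_setE)
    have "Ds ! i \<subseteq> V"
      using near_component_subset[of q "V - closure P" E] q Ds_i by blast
    then show ?thesis
      unfolding u_def using zero_in_NE_block_payoff[OF graph] sat_block_payoff_Rhd[OF graph _ Ds_i] by blast
  qed
  have "sat V (subset_strategies n) (sum_payoff V n u) (Rhd P Q) \<longleftrightarrow> I P Q"
    if "P \<subseteq> V" "Q \<subseteq> V" for P Q
  proof -
    have "sat V (subset_strategies n) (sum_payoff V n u) (Rhd P Q) \<longleftrightarrow>
        (\<forall>i<n. sat V binary_strategies (u i) (Rhd P Q))"
      using u_i by (intro sat_sum_payoff_Rhd) blast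
    also have "\<dots> \<longleftrightarrow> (\<forall>i<n. P \<inter> Ds ! i = {} \<longrightarrow> Q \<inter> Ds ! i = {})"
      using u_i by simp
    also have "\<dots> \<longleftrightarrow> (\<forall>D\<in>critical_sets. P \<inter> D = {} \<longrightarrow> Q \<inter> D = {})"
      unfolding Ds[symmetric] n_def all_set_conv_all_nth ..
    also have "\<dots> \<longleftrightarrow> I P Q"
      using dep_iff_critical_sets[OF that] ..
    finally show ?thesis .
  qed
  moreover have "is_game V E (subset_strategies n) (sum_payoff V n u)"
    unfolding u_def by (intro sum_payoff_game block_payoff_game)
  ultimately show ?thesis
    by blast
qed

end

lemma contiguous_dependence_of_countermodel:
  assumes "graph V E" and valid: "\<And>\<psi>. derivable V E \<psi> \<Longrightarrow> peval I \<psi>"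
  shows "contiguous_dependence V E I"
proof (unfold_locales)
  fix A B assume "A \<subseteq> V" "B \<subseteq> A"
  then show "I A B"
    using valid[OF derivable.refl[of A V B E]] by simp
next
  fix A B C assume "A \<subseteq> V" "B \<subseteq> V" "C \<subseteq> V" "I A B"
  then show "I (A \<union> C) (B \<union> C)"
    using valid[OF derivable.aug[of A V B C E]] by simp
next
  fix A B C assume "A \<subseteq> V" "B \<subseteq> V" "C \<subseteq> V" "I A B" "I B C"
  then show "I A C"
    using valid[OF derivable.trans[of A V B C E]] by simp
next
  fix A B C U W assume "A \<subseteq> V" "B \<subseteq> V" "C \<subseteq> V" "is_cut V U W" "A \<subseteq> U" "C \<subseteq> W" "I (A \<union> B) C"
  then show "I (border V E U \<union> border V E W \<union> B) C"
    using valid[OF derivable.contig[of A V B C U W E]] by simp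
qed (fact assms(1))

theorem theorem1:
  fixes V :: "'v set" and E :: "'v \<Rightarrow> 'v \<Rightarrow> bool" and \<phi> :: "'v fml"
  assumes "graph V E"
    and "wf_fml V \<phi>"
    and "\<not> derivable V E \<phi>"
  shows "\<exists>S u. is_game V E S u \<and> \<not> sat V S u \<phi>"
proof -
  have "finite V"
    using assms(1) unfolding graph_def by blast
  then obtain I where "\<forall>\<psi>. derivable V E \<psi> \<longrightarrow> peval I \<psi>" and "\<not> peval I \<phi>"
    using derivable_countermodel assms(2,3) by blast
  then interpret contiguous_dependence V E I
    using contiguous_dependence_of_countermodel[OF assms(1)] by blast
  obtain S u where "is_game V E S u" and "\<And>P Q. P \<subseteq> V \<Longrightarrow> Q \<subseteq> V \<Longrightarrow> sat V S u (Rhd P Q) = I P Q"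
    using game_realising_dependence by blast
  then show ?thesis
    using sat_iff_peval[of V S u I \<phi>] assms(2) \<open>\<not> peval I \<phi>\<close> by blast
qed

end
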